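(* Let $\mathscr{a}\in\mathbb{R}$, $\mathscr{b}\in(\mathscr{a},\infty)$, $\rho\in(0,\infty)$, $f\in C([\mathscr{a},\mathscr{b}],\mathbb{R})$, for $\theta=(\theta_1,\theta_2,\theta_3,\theta_4)\in\mathbb{R}^4$ and $x\in\mathbb{R}$ let $\mathscr{N}^\theta(x)=\theta_3\max\{\theta_1x+\theta_2,0\}+\theta_4$ and $\mathcal{L}(\theta)=\rho\int_{\mathscr{a}}^{\mathscr{b}}(\mathscr{N}^\theta(y)-f(y))^2\,\mathrm{d}y$, and let $m\in\mathbb{R}$, $\varepsilon\in(0,\infty)$ satisfy $m=\rho\int_{\mathscr{a}}^{\mathscr{b}}\big(f(x)-(\mathscr{b}-\mathscr{a})^{-1}\int_{\mathscr{a}}^{\mathscr{b}}f(y)\,\mathrm{d}y\big)^2\,\mathrm{d}x$. Then there exists $\mathfrak{C}\in(0,\infty)$ such that for all $\theta\in\mathbb{R}^4$ with $\mathcal{L}(\theta)\le m-\varepsilon$ it holds that $\mathfrak{C}^{-1}\le|\theta_1\theta_3|\le\mathfrak{C}$. *)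

theory Defs
  imports "HOL-Analysis.Analysis"
begin

definition realization :: "real \<Rightarrow> real \<Rightarrow> real \<Rightarrow> real \<Rightarrow> real \<Rightarrow> real" where
  "realization t1 t2 t3 t4 x = t3 * max (t1 * x + t2) 0 + t4"

definition risk :: "real \<Rightarrow> real \<Rightarrow> real \<Rightarrow> (real \<Rightarrow> real) \<Rightarrow> real \<Rightarrow> real \<Rightarrow> real \<Rightarrow> real \<Rightarrow> real" where
  "risk a b \<rho> f t1 t2 t3 t4 = \<rho> * integral {a..b} (\<lambda>y. (realization t1 t2 t3 t4 y - f y)^2)"

end

theory Submission
  imports Defs
begin

text \<open>The mean of \<open>f\<close> is its best constant approximation in \<open>L\<^sup>2\<close>, so a network with risk
  below \<open>m - \<epsilon>\<close> must be far from every constant. If \<open>\<bar>\<theta>\<^sub>1 \<theta>\<^sub>3\<bar>\<close> is small, the network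
  oscillates by at most \<open>\<bar>\<theta>\<^sub>1 \<theta>\<^sub>3\<bar> (b - a)\<close> on \<open>[a, b]\<close>, and a weighted Young inequality
  bounds its risk below by \<open>m - \<epsilon>/2 - O(\<bar>\<theta>\<^sub>1 \<theta>\<^sub>3\<bar>\<^sup>2)\<close>. If \<open>\<bar>\<theta>\<^sub>1 \<theta>\<^sub>3\<bar>\<close> is large,
  then outside an interval of length \<open>6 M / \<bar>\<theta>\<^sub>1 \<theta>\<^sub>3\<bar>\<close> (with \<open>M\<close> a bound for \<open>\<bar>f\<bar>\<close>) the
  network is pointwise no better than the constant \<open>\<theta>\<^sub>4\<close> clamped to \<open>[-M, M]\<close>, so its risk is
  at least \<open>m - 24 \<rho> M\<^sup>3 / \<bar>\<theta>\<^sub>1 \<theta>\<^sub>3\<bar>\<close>.\<close>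

definition variance_integral :: "real \<Rightarrow> real \<Rightarrow> (real \<Rightarrow> real) \<Rightarrow> real" where
  "variance_integral a b f = integral {a..b} (\<lambda>x. (f x - integral {a..b} f / (b - a))^2)"

lemma variance_integral_nonneg:
  assumes "continuous_on {a..b} f"
  shows "0 \<le> variance_integral a b f"
  unfolding variance_integral_def
  by (intro integral_nonneg integrable_continuous_interval continuous_intros assms) simp

lemma variance_integral_le_sq_dist_const:
  fixes f :: "real \<Rightarrow> real"
  assumes "a < b" and f: "continuous_on {a..b} f"
  shows "variance_integral a b f \<le> integral {a..b} (\<lambda>x. (c - f x)^2)"
proof -
  define \<mu> where "\<mu> = integral {a..b} f / (b - a)"
  have int: "g integrable_on {a..b}" if "continuous_on {a..b} g" for g :: "real \<Rightarrow> real"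
    using that by (rule integrable_continuous_interval)
  have centred: "integral {a..b} (\<lambda>x. f x - \<mu>) = 0"
    using \<open>a < b\<close> by (simp add: integral_diff int f \<mu>_def)
  have "integral {a..b} (\<lambda>x. (c - f x)^2)
      = integral {a..b} (\<lambda>x. (f x - \<mu>)^2 + 2 * (\<mu> - c) * (f x - \<mu>) + (\<mu> - c)^2)"
    by (rule arg_cong[where f = "integral _"]) (auto simp: fun_eq_iff power2_eq_square algebra_simps)
  also have "\<dots> = variance_integral a b f + 2 * (\<mu> - c) * integral {a..b} (\<lambda>x. f x - \<mu>) + (b - a) * (\<mu> - c)^2"
    using \<open>a < b\<close> by (simp add: integral_add int f continuous_intros variance_integral_def \<mu>_def)
  finally show ?thesis
    using \<open>a < b\<close> by (simp add: centred)
qed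

lemma power2_add_ge_weighted:
  fixes u v \<eta> :: real
  assumes "0 < \<eta>"
  shows "(1 - \<eta>) * u^2 - v^2 / \<eta> \<le> (u + v)^2"
proof -
  have "(u + v)^2 - ((1 - \<eta>) * u^2 - v^2 / \<eta>) = (\<eta> * u + v)^2 / \<eta> + v^2"
    using assms by (simp add: field_simps power2_eq_square)
  moreover have "0 \<le> (\<eta> * u + v)^2 / \<eta> + v^2"
    using assms by simp
  ultimately show ?thesis by linarith
qed

lemma realization_lipschitz:
  "\<bar>realization t1 t2 t3 t4 x - realization t1 t2 t3 t4 y\<bar> \<le> \<bar>t1 * t3\<bar> * \<bar>x - y\<bar>"
proof -
  have "\<bar>max (t1 * x + t2) 0 - max (t1 * y + t2) 0\<bar> \<le> \<bar>t1\<bar> * \<bar>x - y\<bar>"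
    by (auto simp: max_def abs_mult[symmetric] algebra_simps)
  then have "\<bar>t3\<bar> * \<bar>max (t1 * x + t2) 0 - max (t1 * y + t2) 0\<bar> \<le> \<bar>t3\<bar> * (\<bar>t1\<bar> * \<bar>x - y\<bar>)"
    by (rule mult_left_mono) simp
  then show ?thesis
    by (simp add: realization_def abs_mult[symmetric] algebra_simps)
qed

lemma continuous_on_realization [continuous_intros]:
  "continuous_on S (realization t1 t2 t3 t4)"
  unfolding realization_def[abs_def] by (intro continuous_intros)

lemma variance_integral_le_sq_dist_near_const:
  fixes f g :: "real \<Rightarrow> real"
  assumes "a < b" and f: "continuous_on {a..b} f" and g: "continuous_on {a..b} g"
    and "0 < \<eta>" "\<eta> \<le> 1" and near: "\<And>x. x \<in> {a..b} \<Longrightarrow> \<bar>g x - c\<bar> \<le> \<delta>"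
  shows "(1 - \<eta>) * variance_integral a b f - (b - a) * \<delta>^2 / \<eta> \<le> integral {a..b} (\<lambda>x. (g x - f x)^2)"
proof -
  have pointwise: "(1 - \<eta>) * (c - f x)^2 - \<delta>^2 / \<eta> \<le> (g x - f x)^2" if "x \<in> {a..b}" for x
  proof -
    have "(g x - c)^2 \<le> \<delta>^2"
      using near[OF that] by (metis abs_ge_zero power2_abs power_mono)
    then have "(1 - \<eta>) * (c - f x)^2 - \<delta>^2 / \<eta> \<le> (1 - \<eta>) * (c - f x)^2 - (g x - c)^2 / \<eta>"
      using \<open>0 < \<eta>\<close> by (simp add: divide_right_mono)
    also have "\<dots> \<le> (g x - f x)^2"
      using power2_add_ge_weighted[OF \<open>0 < \<eta>\<close>, of "c - f x" "g x - c"] by simp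
    finally show ?thesis .
  qed
  have "(1 - \<eta>) * variance_integral a b f - (b - a) * \<delta>^2 / \<eta>
      \<le> (1 - \<eta>) * integral {a..b} (\<lambda>x. (c - f x)^2) - (b - a) * \<delta>^2 / \<eta>"
    using variance_integral_le_sq_dist_const[OF \<open>a < b\<close> f] \<open>\<eta> \<le> 1\<close> by (simp add: mult_left_mono)
  also have "\<dots> = integral {a..b} (\<lambda>x. (1 - \<eta>) * (c - f x)^2 - \<delta>^2 / \<eta>)"
    using \<open>a < b\<close> by (simp add: integral_diff integrable_continuous_interval f continuous_intros)
  also have "\<dots> \<le> integral {a..b} (\<lambda>x. (g x - f x)^2)"
    using pointwise by (intro integral_le integrable_continuous_interval continuous_intros f g) auto
  finally show ?thesis .
qed

lemma variance_integral_le_sq_dist_off_interval: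
  fixes f g :: "real \<Rightarrow> real"
  assumes "a < b" and f: "continuous_on {a..b} f" and g: "continuous_on {a..b} g" and "0 \<le> r"
    and bounded: "\<And>x. x \<in> {a..b} \<Longrightarrow> \<bar>c - f x\<bar> \<le> K"
    and closer: "\<And>x. x \<in> {a..b} \<Longrightarrow> r < \<bar>x - z\<bar> \<Longrightarrow> \<bar>c - f x\<bar> \<le> \<bar>g x - f x\<bar>"
  shows "variance_integral a b f - 2 * r * K^2 \<le> integral {a..b} (\<lambda>x. (g x - f x)^2)"
proof -
  define I where "I = {z - r..z + r}"
  have I_int: "indicat_real I integrable_on {a..b}" and I_measure: "integral {a..b} (indicat_real I) \<le> 2 * r"
  proof -
    have "I \<inter> {a..b} \<in> lmeasurable"
      by (simp add: I_def)
    moreover have "measure lebesgue (I \<inter> {a..b}) \<le> measure lebesgue I"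
      by (intro measure_mono_fmeasurable) (auto simp: I_def)
    ultimately show "indicat_real I integrable_on {a..b}" "integral {a..b} (indicat_real I) \<le> 2 * r"
      using \<open>0 \<le> r\<close> by (auto simp: integrable_on_indicator integral_indicator I_def)
  qed
  have pointwise: "(c - f x)^2 - K^2 * indicat_real I x \<le> (g x - f x)^2" if "x \<in> {a..b}" for x
  proof (cases "x \<in> I")
    case True
    have "(c - f x)^2 \<le> K^2"
      using bounded[OF that] by (metis abs_ge_zero power2_abs power_mono)
    then have "(c - f x)^2 - K^2 * indicat_real I x \<le> 0"
      using True by simp
    also have "0 \<le> (g x - f x)^2"
      by simp
    finally show ?thesis .
  next
    case False
    then have "r < \<bar>x - z\<bar>"
      by (auto simp: I_def abs_if)
    then show ?thesis
      using closer[OF that] False by (simp add: abs_le_square_iff)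
  qed
  have "variance_integral a b f - 2 * r * K^2 \<le> integral {a..b} (\<lambda>x. (c - f x)^2) - K^2 * integral {a..b} (indicat_real I)"
  proof -
    have "K^2 * integral {a..b} (indicat_real I) \<le> K^2 * (2 * r)"
      using I_measure by (rule mult_left_mono) simp
    then show ?thesis
      using variance_integral_le_sq_dist_const[OF \<open>a < b\<close> f, of c] by (simp add: ac_simps)
  qed
  also have "\<dots> = integral {a..b} (\<lambda>x. (c - f x)^2 - K^2 * indicat_real I x)"
    by (simp add: integral_diff integrable_on_mult_right I_int integrable_continuous_interval f continuous_intros)
  also have "\<dots> \<le> integral {a..b} (\<lambda>x. (g x - f x)^2)"
    using pointwise
    by (intro integral_le integrable_diff integrable_on_mult_right I_int integrable_continuous_interval continuous_intros f g) auto
  finally show ?thesis .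
qed

text \<open>Where \<open>t1 * x + t2 \<le> 0\<close> the network is the constant \<open>t4\<close>; elsewhere it is the affine
  function of slope \<open>t1 * t3\<close> vanishing at \<open>-(t3 * t2 + t4) / (t1 * t3)\<close>.\<close>

lemma realization_farther_than_clamped_bias:
  assumes "t1 * t3 \<noteq> 0" and "\<bar>y\<bar> \<le> M"
    and far: "3 * M / \<bar>t1 * t3\<bar> < \<bar>x - - (t3 * t2 + t4) / (t1 * t3)\<bar>"
  shows "\<bar>max (- M) (min M t4) - y\<bar> \<le> \<bar>realization t1 t2 t3 t4 x - y\<bar>"
proof (cases "t1 * x + t2 \<le> 0")
  case True
  then have "realization t1 t2 t3 t4 x = t4"
    by (simp add: realization_def)
  then show ?thesis
    using \<open>\<bar>y\<bar> \<le> M\<close> by (auto simp: abs_le_iff max_def min_def)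
next
  case False
  then have linear: "realization t1 t2 t3 t4 x = t1 * t3 * x + (t3 * t2 + t4)"
    by (simp add: realization_def algebra_simps)
  have "x - - (t3 * t2 + t4) / (t1 * t3) = realization t1 t2 t3 t4 x / (t1 * t3)"
    using \<open>t1 * t3 \<noteq> 0\<close> by (simp add: linear field_simps)
  with far have "3 * M / \<bar>t1 * t3\<bar> < \<bar>realization t1 t2 t3 t4 x\<bar> / \<bar>t1 * t3\<bar>"
    by (simp add: abs_divide)
  then have "3 * M < \<bar>realization t1 t2 t3 t4 x\<bar>"
    using \<open>t1 * t3 \<noteq> 0\<close> by (simp add: divide_less_cancel)
  then have "2 * M < \<bar>realization t1 t2 t3 t4 x - y\<bar>"
    using \<open>\<bar>y\<bar> \<le> M\<close> abs_triangle_ineq2[of "realization t1 t2 t3 t4 x" y] by linarith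
  moreover have "\<bar>max (- M) (min M t4) - y\<bar> \<le> 2 * M"
    using \<open>\<bar>y\<bar> \<le> M\<close> by (auto simp: abs_le_iff max_def min_def)
  ultimately show ?thesis
    by linarith
qed

lemma risk_bound_imp_abs_weight_product_le:
  assumes "a < b" "0 < \<rho>" "0 < \<epsilon>" and f: "continuous_on {a..b} f"
    and f_bounded: "\<And>x. x \<in> {a..b} \<Longrightarrow> \<bar>f x\<bar> \<le> M"
    and risk: "risk a b \<rho> f t1 t2 t3 t4 \<le> \<rho> * variance_integral a b f - \<epsilon>"
  shows "\<bar>t1 * t3\<bar> \<le> 24 * \<rho> * M^3 / \<epsilon>"
proof (cases "t1 * t3 = 0")
  case True
  have "0 \<le> M"
    using f_bounded[of a] \<open>a < b\<close> by simp
  then have "0 \<le> 24 * \<rho> * M^3 / \<epsilon>"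
    using \<open>0 < \<rho>\<close> \<open>0 < \<epsilon>\<close> by simp
  then show ?thesis
    using True by auto
next
  case False
  define r where "r = 3 * M / \<bar>t1 * t3\<bar>"
  have "0 \<le> M"
    using f_bounded[of a] \<open>a < b\<close> by simp
  have "variance_integral a b f - 2 * r * (2 * M)^2
      \<le> integral {a..b} (\<lambda>x. (realization t1 t2 t3 t4 x - f x)^2)"
  proof (rule variance_integral_le_sq_dist_off_interval[OF \<open>a < b\<close> f continuous_on_realization])
    show "0 \<le> r"
      using \<open>0 \<le> M\<close> by (simp add: r_def)
    show "\<bar>max (- M) (min M t4) - f x\<bar> \<le> 2 * M" if "x \<in> {a..b}" for x
      using f_bounded[OF that] by (auto simp: abs_le_iff max_def min_def)
    show "\<bar>max (- M) (min M t4) - f x\<bar> \<le> \<bar>realization t1 t2 t3 t4 x - f x\<bar>"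
      if "x \<in> {a..b}" "r < \<bar>x - - (t3 * t2 + t4) / (t1 * t3)\<bar>" for x
      using realization_farther_than_clamped_bias[OF False f_bounded] that by (simp add: r_def)
  qed
  then have "\<rho> * (variance_integral a b f - 2 * r * (2 * M)^2) \<le> risk a b \<rho> f t1 t2 t3 t4"
    unfolding risk_def using \<open>0 < \<rho>\<close> by (simp add: mult_left_mono)
  with risk have "\<epsilon> \<le> \<rho> * (2 * r * (2 * M)^2)"
    by (simp add: right_diff_distrib)
  also have "\<dots> = 24 * \<rho> * M^3 / \<bar>t1 * t3\<bar>"
    by (simp add: r_def power2_eq_square power3_eq_cube)
  finally have "\<epsilon> * \<bar>t1 * t3\<bar> \<le> 24 * \<rho> * M^3"
    using False by (simp add: pos_le_divide_eq)
  with \<open>0 < \<epsilon>\<close> show ?thesis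
    by (simp add: pos_le_divide_eq mult.commute)
qed

lemma risk_bound_imp_abs_weight_product_ge:
  assumes "a < b" "0 < \<rho>" "0 < \<epsilon>" and f: "continuous_on {a..b} f"
    and risk: "risk a b \<rho> f t1 t2 t3 t4 \<le> \<rho> * variance_integral a b f - \<epsilon>"
  shows "\<epsilon> / sqrt (4 * \<rho> * (\<rho> * variance_integral a b f + \<epsilon>) * (b - a)^3) \<le> \<bar>t1 * t3\<bar>"
proof -
  define V where "V = variance_integral a b f"
  define \<eta> where "\<eta> = \<epsilon> / (2 * (\<rho> * V + \<epsilon>))"
  define \<delta> where "\<delta> = \<bar>t1 * t3\<bar> * (b - a)"
  have "0 \<le> \<rho> * V"
    using \<open>0 < \<rho>\<close> variance_integral_nonneg[OF f] by (simp add: V_def)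
  then have "0 < \<eta>" "\<eta> \<le> 1" and \<eta>_V: "\<eta> * (\<rho> * V) \<le> \<epsilon> / 2"
    using \<open>0 < \<epsilon>\<close> by (auto simp: \<eta>_def field_simps)
  have "(1 - \<eta>) * V - (b - a) * \<delta>^2 / \<eta> \<le> integral {a..b} (\<lambda>x. (realization t1 t2 t3 t4 x - f x)^2)"
  proof (rule variance_integral_le_sq_dist_near_const[OF \<open>a < b\<close> f continuous_on_realization
        \<open>0 < \<eta>\<close> \<open>\<eta> \<le> 1\<close>, folded V_def])
    show "\<bar>realization t1 t2 t3 t4 x - realization t1 t2 t3 t4 a\<bar> \<le> \<delta>" if "x \<in> {a..b}" for x
    proof -
      have "\<bar>t1 * t3\<bar> * \<bar>x - a\<bar> \<le> \<delta>"
        using that by (auto simp: \<delta>_def intro: mult_left_mono)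
      then show ?thesis
        using realization_lipschitz order_trans by blast
    qed
  qed
  then have "\<rho> * ((1 - \<eta>) * V - (b - a) * \<delta>^2 / \<eta>) \<le> risk a b \<rho> f t1 t2 t3 t4"
    unfolding risk_def using \<open>0 < \<rho>\<close> by (simp add: mult_left_mono)
  with risk have "\<epsilon> \<le> \<eta> * (\<rho> * V) + \<rho> * (b - a) * \<delta>^2 / \<eta>"
    by (simp add: V_def algebra_simps)
  with \<eta>_V have "\<epsilon> / 2 \<le> \<rho> * (b - a) * \<delta>^2 / \<eta>"
    by linarith
  then have "\<epsilon> * \<eta> \<le> 2 * \<rho> * (b - a) * \<delta>^2"
    using \<open>0 < \<eta>\<close> by (simp add: field_simps)
  then have "\<epsilon>^2 \<le> 4 * \<rho> * (\<rho> * V + \<epsilon>) * (b - a)^3 * (t1 * t3)^2"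
    using \<open>0 \<le> \<rho> * V\<close> \<open>0 < \<epsilon>\<close>
    by (simp add: \<eta>_def \<delta>_def field_simps power2_eq_square power3_eq_cube)
  moreover define P where "P = 4 * \<rho> * (\<rho> * V + \<epsilon>) * (b - a)^3"
  ultimately have "\<epsilon> \<le> sqrt (P * (t1 * t3)^2)"
    by (intro real_le_rsqrt) simp
  then have "\<epsilon> \<le> sqrt P * \<bar>t1 * t3\<bar>"
    by (simp add: real_sqrt_mult)
  moreover have "0 < P"
    using \<open>a < b\<close> \<open>0 < \<rho>\<close> \<open>0 < \<epsilon>\<close> \<open>0 \<le> \<rho> * V\<close> by (simp add: P_def)
  ultimately show ?thesis
    by (simp add: P_def V_def pos_divide_le_eq mult.commute)
qed

theorem proposition5p8:
  fixes a b \<rho> m \<epsilon> :: real and f :: "real \<Rightarrow> real"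
  assumes "a < b" and "\<rho> > 0" and "continuous_on {a..b} f"
    and "\<epsilon> > 0"
    and "m = \<rho> * integral {a..b} (\<lambda>x. (f x - integral {a..b} f / (b - a))^2)"
  shows "\<exists>C::real. C > 0 \<and> (\<forall>t1 t2 t3 t4 :: real.
           risk a b \<rho> f t1 t2 t3 t4 \<le> m - \<epsilon> \<longrightarrow>
             1 / C \<le> \<bar>t1 * t3\<bar> \<and> \<bar>t1 * t3\<bar> \<le> C)"
proof -
  have m: "m = \<rho> * variance_integral a b f"
    using assms(5) by (simp add: variance_integral_def)
  obtain M where f_bounded: "\<And>x. x \<in> {a..b} \<Longrightarrow> \<bar>f x\<bar> \<le> M"
    using compact_imp_bounded[OF compact_continuous_image[OF assms(3) compact_Icc]]
    unfolding bounded_real by blast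
  define P where "P = 4 * \<rho> * (m + \<epsilon>) * (b - a)^3"
  define C where "C = max (24 * \<rho> * M^3 / \<epsilon>) (sqrt P / \<epsilon>)"
  have "0 \<le> m"
    using m \<open>0 < \<rho>\<close> variance_integral_nonneg[OF assms(3)] by simp
  then have "0 < P"
    using \<open>a < b\<close> \<open>0 < \<rho>\<close> \<open>0 < \<epsilon>\<close> by (simp add: P_def)
  then have "0 < sqrt P / \<epsilon>"
    using \<open>0 < \<epsilon>\<close> by simp
  then have "0 < C" and "sqrt P / \<epsilon> \<le> C"
    by (auto simp: C_def less_max_iff_disj)
  then have "1 / C \<le> \<epsilon> / sqrt P"
    using le_imp_inverse_le[OF \<open>sqrt P / \<epsilon> \<le> C\<close> \<open>0 < sqrt P / \<epsilon>\<close>]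
    by (simp add: inverse_eq_divide)
  show ?thesis
  proof (intro exI[of _ C] conjI allI impI \<open>0 < C\<close>)
    fix t1 t2 t3 t4
    assume "risk a b \<rho> f t1 t2 t3 t4 \<le> m - \<epsilon>"
    then have risk: "risk a b \<rho> f t1 t2 t3 t4 \<le> \<rho> * variance_integral a b f - \<epsilon>"
      by (simp add: m)
    show "1 / C \<le> \<bar>t1 * t3\<bar>"
      using risk_bound_imp_abs_weight_product_ge[OF assms(1,2,4,3) risk] \<open>1 / C \<le> \<epsilon> / sqrt P\<close>
      by (simp add: P_def m)
    show "\<bar>t1 * t3\<bar> \<le> C"
      using risk_bound_imp_abs_weight_product_le[OF assms(1,2,4,3) f_bounded risk]
      by (simp add: C_def)
  qed
qed

end
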